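(* Let $(G,\sigma)$ be a connection graph and $i,j\in V$ distinct fixed vertices. Let $\mathcal{V}_{i\to j}:V\to\mathbb{R}^{d\times d}$ be the connection voltage function, i.e. the unique solution of $(\mathcal{L}\mathcal{V}_{i\to j})(x)=0_{d\times d}$ for $x\in V\setminus\{i,j\}$, $\mathcal{V}_{i\to j}(i)=I_{d\times d}$, $\mathcal{V}_{i\to j}(j)=0_{d\times d}$. Then for every $x\in V$, $$\mathcal{V}_{i\to j}(x)=\mathbb{P}^x[T^0_i<T^0_j]\cdot\Omega^0_{xi}(j).$$
   Context: A connection graph $(G,\sigma)$: finite connected weighted graph $G=(V,E,W)$ with $w_{ij}>0$ iff $\{i,j\}\in E$, $\deg(i)=\sum_j w_{ij}$, and $\sigma$ mapping oriented edges to $\mathsf{O}(d)$ with $\sigma_{ji}=\sigma_{ij}^{\mathrm T}$; $(\mathcal{L}f)(x)=\sum_{y\sim x}w_{xy}(f(x)-\sigma_{xy}f(y))$ for $f:V\to\mathbb{R}^{d\times d}$. $(X_t)$ is the simple random walk with transition probabilities $w_{xy}/\deg(x)$; $\mathbb{P}^x,\mathbb{E}^x$ denote probability/expectation given $X_0=x$; $T^0_k=\inf\{t\ge0:X_t=k\}$. The conditional mean path signature is $\Omega^0_{xi}(j)=\mathbb{E}^x\big[\prod_{\ell=1}^{T^0_i}\sigma_{X_{\ell-1}X_\ell}\mid T^0_i<T^0_j\big]$ (ordered product, empty product $=I_d$). *)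

theory Defs
  imports "HOL-Analysis.Analysis"
begin

text \<open>Vertices form a finite type 'v; matrices are real^'d^'d.
  Weights w :: 'v => 'v => real (w x y > 0 iff {x,y} is an edge, else 0).\<close>

definition connection_graph ::
  "('v::finite \<Rightarrow> 'v \<Rightarrow> real) \<Rightarrow> ('v \<Rightarrow> 'v \<Rightarrow> real^'d::finite^'d) \<Rightarrow> bool" where
  "connection_graph w \<sigma> \<longleftrightarrow>
     (\<forall>x y. w x y \<ge> 0) \<and> (\<forall>x y. w x y = w y x) \<and>
     {(x, y). w x y > 0}\<^sup>* = UNIV \<and>
     (\<forall>x y. orthogonal_matrix (\<sigma> x y)) \<and>
     (\<forall>x y. \<sigma> y x = transpose (\<sigma> x y))"

definition deg :: "('v::finite \<Rightarrow> 'v \<Rightarrow> real) \<Rightarrow> 'v \<Rightarrow> real" where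
  "deg w x = (\<Sum>y\<in>UNIV. w x y)"

definition conn_laplacian ::
  "('v::finite \<Rightarrow> 'v \<Rightarrow> real) \<Rightarrow> ('v \<Rightarrow> 'v \<Rightarrow> real^'d::finite^'d)
    \<Rightarrow> ('v \<Rightarrow> real^'d^'d) \<Rightarrow> 'v \<Rightarrow> real^'d^'d" where
  "conn_laplacian w \<sigma> f x = (\<Sum>y\<in>UNIV. w x y *\<^sub>R (f x - \<sigma> x y ** f y))"

definition trans_prob :: "('v::finite \<Rightarrow> 'v \<Rightarrow> real) \<Rightarrow> 'v \<Rightarrow> 'v \<Rightarrow> real" where
  "trans_prob w x y = w x y / deg w x"

fun path_prob :: "('v::finite \<Rightarrow> 'v \<Rightarrow> real) \<Rightarrow> 'v list \<Rightarrow> real" where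
  "path_prob w (x # y # p) = trans_prob w x y * path_prob w (y # p)"
| "path_prob w _ = 1"

fun path_signature :: "('v \<Rightarrow> 'v \<Rightarrow> real^'d::finite^'d) \<Rightarrow> 'v list \<Rightarrow> real^'d^'d" where
  "path_signature \<sigma> (x # y # p) = \<sigma> x y ** path_signature \<sigma> (y # p)"
| "path_signature \<sigma> _ = mat 1"

text \<open>Initial segments (X_0,...,X_{T_i}) of walks from x on the event T_i < T_j:
  they start at x, end at i, and visit neither i nor j before the last step.\<close>
definition hit_paths :: "'v \<Rightarrow> 'v \<Rightarrow> 'v \<Rightarrow> 'v list set" where
  "hit_paths x i j = {p. p \<noteq> [] \<and> hd p = x \<and> last p = i \<and>
      (\<forall>k < length p - 1. p ! k \<noteq> i \<and> p ! k \<noteq> j)}"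

definition hit_prob :: "('v::finite \<Rightarrow> 'v \<Rightarrow> real) \<Rightarrow> 'v \<Rightarrow> 'v \<Rightarrow> 'v \<Rightarrow> real" where
  "hit_prob w x i j = (\<Sum>\<^sub>\<infinity>p\<in>hit_paths x i j. path_prob w p)"

text \<open>Omega^0_{xi}(j) = E^x[prod sigma | T_i < T_j]
  = E^x[prod sigma ; T_i < T_j] / P^x[T_i < T_j].\<close>
definition cond_mean_signature ::
  "('v::finite \<Rightarrow> 'v \<Rightarrow> real) \<Rightarrow> ('v \<Rightarrow> 'v \<Rightarrow> real^'d::finite^'d) \<Rightarrow> 'v \<Rightarrow> 'v \<Rightarrow> 'v \<Rightarrow> real^'d^'d" where
  "cond_mean_signature w \<sigma> x i j =
     (1 / hit_prob w x i j) *\<^sub>R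
       (\<Sum>\<^sub>\<infinity>p\<in>hit_paths x i j. path_prob w p *\<^sub>R path_signature \<sigma> p)"

end

theory Submission
  imports Defs
begin

(* Both sides, as functions of x, solve the same Dirichlet problem: they are
   connection-harmonic off {i, j} with boundary values I at i and 0 at j.
   For the right-hand side, P^x[T_i < T_j] * Omega = E^x[prod sigma; T_i < T_j] is a
   sum over hitting paths, and splitting off the first step of each path gives the
   mean value property. Uniqueness is a maximum principle applied column by column:
   since |sigma v| = |v|, the maximal norm of a harmonic vector field spreads along
   every edge and so reaches the boundary, where it vanishes. *)

lemma bounded_linear_matrix_mult_left:
  "bounded_linear (\<lambda>B. (A :: real^'n^'m) ** (B :: real^'k^'n))"
  unfolding linear_conv_bounded_linear[symmetric]
  by (rule linearI) (simp_all add: matrix_add_ldistrib matrix_scalar_ac scalar_matrix_assoc)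

lemma matrix_diff_ldistrib: "(A :: 'a::ring_1^'n^'m) ** (B - C) = A ** B - A ** C"
  by (simp add: matrix_matrix_mult_def vec_eq_iff sum_subtractf right_diff_distrib)

lemma matrix_vector_mult_sum_left: "(\<Sum>y\<in>A. g y) *v v = (\<Sum>y\<in>A. g y *v v)"
  by (induction A rule: infinite_finite_induct) (simp_all add: matrix_vector_mult_add_rdistrib)

lemma norm_orthogonal_matrix:
  fixes A :: "real^'n^'n"
  assumes "orthogonal_matrix A"
  shows "norm A = sqrt (real CARD('n))"
proof -
  have "norm (A $ k) = 1" for k
    using assms by (simp add: orthogonal_matrix_orthonormal_rows row_def)
  then show ?thesis by (simp add: norm_vec_def L2_set_constant)
qed

lemma norm_orthogonal_matrix_mult_vec:
  fixes A :: "real^'n^'n"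
  assumes "orthogonal_matrix A"
  shows "norm (A *v v) = norm v"
  using assms by (simp add: orthogonal_transformation_matrix orthogonal_transformation_norm)

lemma hit_paths_at_target: "hit_paths i i j = {[i]}"
proof (intro set_eqI iffI)
  fix p assume p: "p \<in> hit_paths i i j"
  then obtain q where "p = i # q" by (cases p) (auto simp: hit_paths_def)
  with p show "p \<in> {[i]}" by (cases q) (auto simp: hit_paths_def dest!: spec[of _ 0])
qed (simp add: hit_paths_def)

lemma hit_paths_at_avoided: "i \<noteq> j \<Longrightarrow> hit_paths j i j = {}"
  unfolding hit_paths_def by (auto simp: neq_Nil_conv dest!: spec[of _ 0])

lemma hit_paths_unfold:
  assumes "x \<noteq> i" "x \<noteq> j"
  shows "hit_paths x i j = (\<Union>y. (#) x ` hit_paths y i j)"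
proof (intro set_eqI iffI)
  fix p assume p: "p \<in> hit_paths x i j"
  then obtain q where q: "p = x # q" by (cases p) (auto simp: hit_paths_def)
  with p assms have "q \<noteq> []" by (auto simp: hit_paths_def)
  moreover have "q ! k \<noteq> i \<and> q ! k \<noteq> j" if "k < length q - 1" for k
    using p q that by (auto simp: hit_paths_def dest!: spec[of _ "Suc k"])
  ultimately have "q \<in> hit_paths (hd q) i j" using p q by (simp add: hit_paths_def)
  with q show "p \<in> (\<Union>y. (#) x ` hit_paths y i j)" by blast
next
  fix p assume "p \<in> (\<Union>y. (#) x ` hit_paths y i j)"
  then obtain y q where "p = x # q" "q \<in> hit_paths y i j" by blast
  with assms show "p \<in> hit_paths x i j"
    by (auto simp: hit_paths_def nth_Cons split: nat.split)
qed

lemma path_prob_Cons: "q \<noteq> [] \<Longrightarrow> path_prob w (x # q) = trans_prob w x (hd q) * path_prob w q"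
  by (cases q) auto

lemma path_signature_Cons:
  "q \<noteq> [] \<Longrightarrow> path_signature \<sigma> (x # q) = \<sigma> x (hd q) ** path_signature \<sigma> q"
  by (cases q) auto

lemma weight_le_deg: "(\<And>x y. 0 \<le> w x y) \<Longrightarrow> w x y \<le> deg w x"
  unfolding deg_def by (rule member_le_sum) auto

lemma trans_prob_nonneg: "(\<And>x y. 0 \<le> w x y) \<Longrightarrow> 0 \<le> trans_prob w x y"
  unfolding trans_prob_def deg_def by (simp add: sum_nonneg)

lemma trans_prob_pos: "(\<And>x y. 0 \<le> w x y) \<Longrightarrow> 0 < w x y \<Longrightarrow> 0 < trans_prob w x y"
  using weight_le_deg[of w x y] unfolding trans_prob_def by simp

(* Only an inequality: at a vertex of degree 0 every trans_prob is 0 / 0 = 0. *)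
lemma sum_trans_prob_le_1: "(\<And>x y. 0 \<le> w x y) \<Longrightarrow> (\<Sum>y\<in>UNIV. trans_prob w x y) \<le> 1"
  unfolding trans_prob_def sum_divide_distrib[symmetric] deg_def[symmetric]
  by (simp add: divide_le_eq_1)

lemma path_prob_nonneg: "(\<And>x y. 0 \<le> w x y) \<Longrightarrow> 0 \<le> path_prob w p"
  by (induction p rule: induct_list012) (simp_all add: trans_prob_nonneg)

lemma orthogonal_path_signature:
  "(\<And>x y. orthogonal_matrix (\<sigma> x y)) \<Longrightarrow> orthogonal_matrix (path_signature \<sigma> p)"
  by (induction p rule: induct_list012) (simp_all add: orthogonal_matrix_mul orthogonal_matrix_id)

lemma has_sum_Cons_Union:
  fixes g :: "'v::finite list \<Rightarrow> 'b::topological_comm_monoid_add"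
  assumes "\<And>y. ((\<lambda>q. g (x # q)) has_sum s y) (S y)"
    and "\<And>y. S y \<subseteq> {q. q \<noteq> [] \<and> hd q = y}"
  shows "(g has_sum (\<Sum>y\<in>UNIV. s y)) (\<Union>y. (#) x ` S y)"
proof (rule sum_has_sum)
  show "(g has_sum s y) ((#) x ` S y)" for y
    using assms(1)[of y] by (simp add: has_sum_reindex o_def)
  show "(#) x ` S y \<inter> (#) x ` S z = {}" if "y \<noteq> z" for y z
    using assms(2)[of y] assms(2)[of z] that by auto
qed simp

lemma finite_lists_length_le_UNIV: "finite {p :: 'a::finite list. length p \<le> N}"
  using finite_lists_length_le[of "UNIV :: 'a set" N] by simp

lemma sum_path_prob_hit_paths_first_step:
  assumes "x \<noteq> i" "x \<noteq> j"
  shows "sum (path_prob w) (hit_paths x i j \<inter> {p. length p \<le> Suc N}) =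
    (\<Sum>y\<in>UNIV. trans_prob w x y * sum (path_prob w) (hit_paths y i j \<inter> {p. length p \<le> N}))"
proof -
  define S where "S y = hit_paths y i j \<inter> {p. length p \<le> N}" for y
  have S_hd: "S y \<subseteq> {q. q \<noteq> [] \<and> hd q = y}" for y
    by (auto simp: S_def hit_paths_def)
  have "((\<lambda>q. path_prob w (x # q)) has_sum (trans_prob w x y * sum (path_prob w) (S y))) (S y)" for y
  proof -
    have "finite (S y)"
      by (rule finite_subset[OF _ finite_lists_length_le_UNIV[of N]]) (auto simp: S_def)
    then have "((\<lambda>q. trans_prob w x y * path_prob w q) has_sum
        (trans_prob w x y * sum (path_prob w) (S y))) (S y)"
      by (intro has_sum_cmult_right has_sum_finite)
    moreover have "path_prob w (x # q) = trans_prob w x y * path_prob w q" if "q \<in> S y" for q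
      using S_hd[of y] that path_prob_Cons[of q w x] by auto
    ultimately show ?thesis by (simp cong: has_sum_cong)
  qed
  then have "(path_prob w has_sum (\<Sum>y\<in>UNIV. trans_prob w x y * sum (path_prob w) (S y)))
      (\<Union>y. (#) x ` S y)"
    by (rule has_sum_Cons_Union[OF _ S_hd])
  moreover have "hit_paths x i j \<inter> {p. length p \<le> Suc N} = (\<Union>y. (#) x ` S y)"
    unfolding hit_paths_unfold[OF assms] S_def by auto
  moreover have "finite (hit_paths x i j \<inter> {p. length p \<le> Suc N})"
    by (rule finite_subset[OF _ finite_lists_length_le_UNIV[of "Suc N"]]) auto
  ultimately show ?thesis by (simp add: has_sum_finite_iff S_def)
qed

lemma sum_path_prob_hit_paths_le_1:
  assumes nonneg: "\<And>x y. 0 \<le> w x y"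
  shows "sum (path_prob w) (hit_paths x i j \<inter> {p. length p \<le> N}) \<le> 1"
proof (induction N arbitrary: x)
  case 0
  have "hit_paths x i j \<inter> {p. length p \<le> 0} = {}" by (auto simp: hit_paths_def)
  then show ?case by simp
next
  case (Suc N)
  consider "x = i" | "x = j" "x \<noteq> i" | "x \<noteq> i" "x \<noteq> j" by blast
  then show ?case
  proof cases
    case 1
    then have "hit_paths x i j \<inter> {p. length p \<le> Suc N} = {[i]}"
      by (auto simp: hit_paths_at_target)
    then show ?thesis by simp
  next
    case 2
    then show ?thesis by (simp add: hit_paths_at_avoided)
  next
    case 3
    have "sum (path_prob w) (hit_paths x i j \<inter> {p. length p \<le> Suc N})
        \<le> (\<Sum>y\<in>UNIV. trans_prob w x y)"
      unfolding sum_path_prob_hit_paths_first_step[OF 3] using Suc.IH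
      by (intro sum_mono mult_right_le_one_le)
        (auto simp: trans_prob_nonneg path_prob_nonneg sum_nonneg nonneg)
    also have "\<dots> \<le> 1" by (rule sum_trans_prob_le_1[OF nonneg])
    finally show ?thesis .
  qed
qed

lemma path_prob_summable_on_hit_paths:
  assumes "\<And>x y. 0 \<le> w x y"
  shows "path_prob w summable_on hit_paths x i j"
proof (rule nonneg_bdd_above_summable_on)
  show "bdd_above (sum (path_prob w) ` {F. F \<subseteq> hit_paths x i j \<and> finite F})"
  proof (rule bdd_aboveI, safe)
    fix F assume F: "F \<subseteq> hit_paths x i j" "finite F"
    define N where "N = Max (length ` F)"
    have "sum (path_prob w) F \<le> sum (path_prob w) (hit_paths x i j \<inter> {p. length p \<le> N})"
      using F by (intro sum_mono2 finite_subset[OF _ finite_lists_length_le_UNIV[of N]])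
        (auto simp: N_def path_prob_nonneg assms)
    also have "\<dots> \<le> 1" by (rule sum_path_prob_hit_paths_le_1[OF assms])
    finally show "sum (path_prob w) F \<le> 1" .
  qed
qed (simp add: path_prob_nonneg assms)

definition hit_signature_sum ::
  "('v::finite \<Rightarrow> 'v \<Rightarrow> real) \<Rightarrow> ('v \<Rightarrow> 'v \<Rightarrow> real^'d::finite^'d)
    \<Rightarrow> 'v \<Rightarrow> 'v \<Rightarrow> 'v \<Rightarrow> real^'d^'d"
  where "hit_signature_sum w \<sigma> x i j =
    (\<Sum>\<^sub>\<infinity>p\<in>hit_paths x i j. path_prob w p *\<^sub>R path_signature \<sigma> p)"

lemma hit_signature_summable:
  fixes \<sigma> :: "'v::finite \<Rightarrow> 'v \<Rightarrow> real^'d::finite^'d"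
  assumes nonneg: "\<And>x y. 0 \<le> w x y" and orth: "\<And>x y. orthogonal_matrix (\<sigma> x y)"
  shows "(\<lambda>p. path_prob w p *\<^sub>R path_signature \<sigma> p) summable_on hit_paths x i j"
proof (rule abs_summable_summable)
  have "(\<lambda>p. path_prob w p * sqrt (real CARD('d))) summable_on hit_paths x i j"
    using path_prob_summable_on_hit_paths[OF nonneg] by (rule summable_on_cmult_left)
  moreover have "norm (path_prob w p *\<^sub>R path_signature \<sigma> p) = path_prob w p * sqrt (real CARD('d))"
    for p :: "'v list"
    using norm_orthogonal_matrix[OF orthogonal_path_signature[of \<sigma>, OF orth]] path_prob_nonneg[of w, OF nonneg]
    by simp
  ultimately show "(\<lambda>p. norm (path_prob w p *\<^sub>R path_signature \<sigma> p)) summable_on hit_paths x i j"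
    by simp
qed

lemma hit_signature_sum_at_target: "hit_signature_sum w \<sigma> i i j = mat 1"
  by (simp add: hit_signature_sum_def hit_paths_at_target)

lemma hit_signature_sum_at_avoided: "i \<noteq> j \<Longrightarrow> hit_signature_sum w \<sigma> j i j = 0"
  by (simp add: hit_signature_sum_def hit_paths_at_avoided)

lemma hit_signature_sum_first_step:
  assumes nonneg: "\<And>x y. 0 \<le> w x y" and orth: "\<And>x y. orthogonal_matrix (\<sigma> x y)"
    and "x \<noteq> i" "x \<noteq> j"
  shows "hit_signature_sum w \<sigma> x i j =
    (\<Sum>y\<in>UNIV. trans_prob w x y *\<^sub>R (\<sigma> x y ** hit_signature_sum w \<sigma> y i j))"
proof -
  let ?f = "\<lambda>p. path_prob w p *\<^sub>R path_signature \<sigma> p"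
  let ?U = "\<lambda>y. hit_signature_sum w \<sigma> y i j"
  have "((\<lambda>q. ?f (x # q)) has_sum (trans_prob w x y *\<^sub>R (\<sigma> x y ** ?U y))) (hit_paths y i j)" for y
  proof -
    have "(?f has_sum ?U y) (hit_paths y i j)"
      unfolding hit_signature_sum_def by (intro has_sum_infsum hit_signature_summable nonneg orth)
    then have "((\<lambda>q. trans_prob w x y *\<^sub>R (\<sigma> x y ** ?f q)) has_sum
        trans_prob w x y *\<^sub>R (\<sigma> x y ** ?U y)) (hit_paths y i j)"
      by (rule has_sum_bounded_linear[rotated])
        (intro bounded_linear_compose[OF bounded_linear_scaleR_right] bounded_linear_matrix_mult_left)
    moreover have "?f (x # q) = trans_prob w x y *\<^sub>R (\<sigma> x y ** ?f q)" if "q \<in> hit_paths y i j" for q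
      using that by (auto simp: hit_paths_def path_prob_Cons path_signature_Cons
          matrix_scalar_ac scalar_matrix_assoc)
    ultimately show ?thesis by (simp cong: has_sum_cong)
  qed
  then have "(?f has_sum (\<Sum>y\<in>UNIV. trans_prob w x y *\<^sub>R (\<sigma> x y ** ?U y)))
      (\<Union>y. (#) x ` hit_paths y i j)"
    by (rule has_sum_Cons_Union) (auto simp: hit_paths_def)
  then show ?thesis
    unfolding hit_signature_sum_def[of w \<sigma> x] hit_paths_unfold[OF assms(3,4)] by (rule infsumI)
qed

(* If P^x[T_i < T_j] = 0, cond_mean_signature is the junk value 1/0 *R _ = 0, but then
   every hitting path has probability 0 and the right-hand side vanishes as well. *)
lemma hit_prob_scaleR_cond_mean_signature:
  assumes nonneg: "\<And>x y. 0 \<le> w x y"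
  shows "hit_prob w x i j *\<^sub>R cond_mean_signature w \<sigma> x i j = hit_signature_sum w \<sigma> x i j"
proof (cases "hit_prob w x i j = 0")
  case True
  have "path_prob w p = 0" if "p \<in> hit_paths x i j" for p
    using True that path_prob_summable_on_hit_paths[OF nonneg] path_prob_nonneg[OF nonneg]
    by (intro nonneg_infsum_le_0D[where A = "hit_paths x i j"]) (auto simp: hit_prob_def)
  then have "hit_signature_sum w \<sigma> x i j = 0"
    unfolding hit_signature_sum_def by (intro infsum_0) simp
  with True show ?thesis by simp
qed (simp add: cond_mean_signature_def hit_signature_sum_def)

lemma deg_pos:
  assumes "connection_graph w \<sigma>" "y \<noteq> x"
  shows "0 < deg w x"
proof -
  have nonneg: "\<And>x y. 0 \<le> w x y" and "(x, y) \<in> {(x, y). 0 < w x y}\<^sup>*"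
    using assms(1) unfolding connection_graph_def by blast+
  from this(2) obtain z where "0 < w x z" using assms(2) by (cases rule: converse_rtranclE) blast+
  with weight_le_deg[of w x z, OF nonneg] show ?thesis by simp
qed

lemma conn_laplacian_eq_0_iff:
  assumes "0 < deg w x"
  shows "conn_laplacian w \<sigma> V x = 0 \<longleftrightarrow>
    V x = (\<Sum>y\<in>UNIV. trans_prob w x y *\<^sub>R (\<sigma> x y ** V y))"
proof -
  have "conn_laplacian w \<sigma> V x = deg w x *\<^sub>R V x - (\<Sum>y\<in>UNIV. w x y *\<^sub>R (\<sigma> x y ** V y))"
    by (simp add: conn_laplacian_def deg_def scaleR_diff_right sum_subtractf scaleR_sum_left)
  also have "(\<Sum>y\<in>UNIV. w x y *\<^sub>R (\<sigma> x y ** V y)) =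
      deg w x *\<^sub>R (\<Sum>y\<in>UNIV. trans_prob w x y *\<^sub>R (\<sigma> x y ** V y))"
    using assms by (simp add: trans_prob_def scaleR_sum_right)
  finally show ?thesis using assms by (simp add: scaleR_diff_right[symmetric])
qed

lemma mean_value_norm_max_propagates:
  fixes f :: "'v::finite \<Rightarrow> real^'d::finite"
  assumes nonneg: "\<And>x y. 0 \<le> w x y" and orth: "\<And>x y. orthogonal_matrix (\<sigma> x y)"
    and le_M: "\<And>u. norm (f u) \<le> M"
    and mean_value: "f y = (\<Sum>u\<in>UNIV. trans_prob w y u *\<^sub>R (\<sigma> y u *v f u))"
    and "norm (f y) = M" "0 < w y z"
  shows "norm (f z) = M"
proof (rule ccontr)
  assume "norm (f z) \<noteq> M"
  with le_M[of z] have "norm (f z) < M" by simp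
  moreover have "0 < trans_prob w y z" using trans_prob_pos[of w, OF nonneg] \<open>0 < w y z\<close> by blast
  ultimately have strict: "trans_prob w y z * norm (f z) < trans_prob w y z * M" by simp
  have "M = norm (\<Sum>u\<in>UNIV. trans_prob w y u *\<^sub>R (\<sigma> y u *v f u))"
    using \<open>norm (f y) = M\<close> mean_value by simp
  also have "\<dots> \<le> (\<Sum>u\<in>UNIV. norm (trans_prob w y u *\<^sub>R (\<sigma> y u *v f u)))"
    by (rule norm_sum)
  also have "\<dots> = (\<Sum>u\<in>UNIV. trans_prob w y u * norm (f u))"
    by (simp add: norm_orthogonal_matrix_mult_vec orth trans_prob_nonneg[of w, OF nonneg])
  also have "\<dots> < (\<Sum>u\<in>UNIV. trans_prob w y u * M)"
    using strict le_M
    by (intro sum_strict_mono_ex1) (auto intro: mult_left_mono simp: trans_prob_nonneg[of w, OF nonneg])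
  also have "\<dots> \<le> M"
    using sum_trans_prob_le_1[of w y, OF nonneg] norm_ge_zero[of "f y"] \<open>norm (f y) = M\<close>
    by (simp add: sum_distrib_right[symmetric] mult_left_le_one_le sum_nonneg trans_prob_nonneg nonneg)
  finally show False by simp
qed

lemma connection_mean_value_vanishing:
  fixes f :: "'v::finite \<Rightarrow> real^'d::finite"
  assumes cg: "connection_graph w \<sigma>" and "b \<in> B"
    and boundary: "\<And>x. x \<in> B \<Longrightarrow> f x = 0"
    and mean_value:
      "\<And>x. x \<notin> B \<Longrightarrow> f x = (\<Sum>y\<in>UNIV. trans_prob w x y *\<^sub>R (\<sigma> x y *v f y))"
  shows "f x = 0"
proof -
  have nonneg: "\<And>x y. 0 \<le> w x y" and orth: "\<And>x y. orthogonal_matrix (\<sigma> x y)"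
    and connected: "{(x, y). 0 < w x y}\<^sup>* = UNIV"
    using cg unfolding connection_graph_def by blast+
  define M where "M = Max (range (\<lambda>u. norm (f u)))"
  have le_M: "norm (f u) \<le> M" for u unfolding M_def by (rule Max_ge) auto
  have "M \<in> range (\<lambda>u. norm (f u))" unfolding M_def by (rule Max_in) auto
  then obtain x0 where "norm (f x0) = M" by auto
  have spread: "norm (f u) = M" if "(x0, u) \<in> {(x, y). 0 < w x y}\<^sup>*" for u
    using that
  proof (induction rule: rtrancl_induct)
    case (step y z)
    show ?case
    proof (cases "y \<in> B")
      case True
      with step.IH boundary have "M = 0" by simp
      with le_M[of z] show ?thesis by simp
    next
      case False
      show ?thesis
        using mean_value_norm_max_propagates[of w \<sigma> f M y z, OF nonneg orth le_M mean_value[OF False]]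
          step by simp
    qed
  qed (fact \<open>norm (f x0) = M\<close>)
  have "norm (f b) = M" by (rule spread) (simp add: connected)
  with boundary[OF \<open>b \<in> B\<close>] have "M = 0" by simp
  with le_M[of x] show ?thesis by simp
qed

lemma connection_mean_value_unique:
  fixes U V :: "'v::finite \<Rightarrow> real^'d::finite^'d"
  assumes cg: "connection_graph w \<sigma>" and "b \<in> B" and boundary: "\<And>x. x \<in> B \<Longrightarrow> U x = V x"
    and "\<And>x. x \<notin> B \<Longrightarrow> U x = (\<Sum>y\<in>UNIV. trans_prob w x y *\<^sub>R (\<sigma> x y ** U y))"
    and "\<And>x. x \<notin> B \<Longrightarrow> V x = (\<Sum>y\<in>UNIV. trans_prob w x y *\<^sub>R (\<sigma> x y ** V y))"
  shows "U = V"
proof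
  fix x
  have mean_value: "U x - V x = (\<Sum>y\<in>UNIV. trans_prob w x y *\<^sub>R (\<sigma> x y ** (U y - V y)))"
    if "x \<notin> B" for x
    using assms(4,5)[OF that] by (simp add: matrix_diff_ldistrib scaleR_diff_right sum_subtractf)
  have "(U x - V x) *v e = 0" for e
  proof (rule connection_mean_value_vanishing[OF cg \<open>b \<in> B\<close>])
    show "(U x - V x) *v e = 0" if "x \<in> B" for x using boundary[OF that] by simp
    show "(U x - V x) *v e = (\<Sum>y\<in>UNIV. trans_prob w x y *\<^sub>R (\<sigma> x y *v ((U y - V y) *v e)))"
      if "x \<notin> B" for x
      by (simp add: mean_value[OF that] matrix_vector_mult_sum_left scaleR_matrix_vector_assoc
          matrix_vector_mul_assoc)
  qed
  then show "U x = V x" by (simp add: matrix_eq matrix_vector_mult_diff_rdistrib)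
qed

theorem theorem5p8:
  fixes w :: "'v::finite \<Rightarrow> 'v \<Rightarrow> real"
    and \<sigma> :: "'v \<Rightarrow> 'v \<Rightarrow> real^'d::finite^'d"
    and V :: "'v \<Rightarrow> real^'d^'d"
    and i j :: 'v
  assumes "connection_graph w \<sigma>"
    and "i \<noteq> j"
    and "\<And>x. x \<noteq> i \<Longrightarrow> x \<noteq> j \<Longrightarrow> conn_laplacian w \<sigma> V x = 0"
    and "V i = mat 1"
    and "V j = 0"
  shows "\<forall>x. V x = hit_prob w x i j *\<^sub>R cond_mean_signature w \<sigma> x i j"
proof -
  have nonneg: "\<And>x y. 0 \<le> w x y" and orth: "\<And>x y. orthogonal_matrix (\<sigma> x y)"
    using assms(1) unfolding connection_graph_def by blast+
  let ?U = "\<lambda>x. hit_signature_sum w \<sigma> x i j"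
  have "V = ?U"
  proof (rule connection_mean_value_unique[OF assms(1), of i "{i, j}"])
    show "V y = ?U y" if "y \<in> {i, j}" for y
      using that assms(2,4,5) by (auto simp: hit_signature_sum_at_target hit_signature_sum_at_avoided)
    show "V y = (\<Sum>z\<in>UNIV. trans_prob w y z *\<^sub>R (\<sigma> y z ** V z))" if "y \<notin> {i, j}" for y
      using that assms(3) conn_laplacian_eq_0_iff[OF deg_pos[OF assms(1), of i y]] by auto
    show "?U y = (\<Sum>z\<in>UNIV. trans_prob w y z *\<^sub>R (\<sigma> y z ** ?U z))" if "y \<notin> {i, j}" for y
      using that hit_signature_sum_first_step[of w \<sigma>, OF nonneg orth] by auto
  qed simp
  then show ?thesis by (simp add: hit_prob_scaleR_cond_mean_signature[of w, OF nonneg])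
qed

end
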